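(* Let $n\le -9$ be an odd integer with $3\mid n$. Then $$q_{n+2}-q_{n+4}+(w^2-1)\big(q'_{n+2}-q'_{n+4}\big)\equiv 0\pmod 3,$$ i.e. this polynomial in $\mathbb{Z}[w]$ has all coefficients divisible by $3$, where $'$ denotes $d/dw$.
   Context: Define $q_n\in\mathbb{Z}[w]$ for odd $n\le -1$ by $q_{-1}=w^3-w^2+2w-7$, $q_{-3}=w^5-2w^4-2w^3+5w^2+3w-9$, $q_{-5}=w^7-2w^6-4w^5+8w^4+4w^3-7w^2+2w-7$, and $q_n=(w^2-1)(q_{n+2}-q_{n+4})+q_{n+6}$ for odd $n<-5$. *)

theory Defs
  imports "HOL-Computational_Algebra.Polynomial"
begin

text \<open>Q k represents q_{-(2k+1)}.\<close>
fun Q :: "nat \<Rightarrow> int poly" where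
  "Q 0 = [:-7, 2, -1, 1:]"
| "Q (Suc 0) = [:-9, 3, 5, -2, -2, 1:]"
| "Q (Suc (Suc 0)) = [:-7, 2, -7, 4, 8, -4, -2, 1:]"
| "Q (Suc (Suc (Suc k))) =
     [:-1, 0, 1:] * (Q (Suc (Suc k)) - Q (Suc k)) + Q k"

text \<open>q n for odd n \<le> -1 (value for other n is irrelevant).\<close>
definition q :: "int \<Rightarrow> int poly" where
  "q n = Q (nat ((- n - 1) div 2))"

end

theory Submission
  imports Defs
begin

text \<open>
  Write \<open>L P = P + (w^2 - 1) P'\<close> and \<open>D k = Q (k+1) - Q k\<close>, so that the claim
  says that 3 divides \<open>L (D (3m+2))\<close> for \<open>n = -6m - 9\<close>.
  The defining recurrence of \<open>Q\<close> turns into the second order recurrence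
  \<open>D (k+2) = t D (k+1) - D k\<close> with \<open>t = w^2 - 2\<close>.  Iterating such a
  Chebyshev-type recurrence three times gives \<open>D (k+6) = s D (k+3) - D k\<close> with
  \<open>s = t^3 - 3t\<close>.  Since \<open>s' = 3 (t^2 - 1) t'\<close> is divisible by 3, the product rule
  shows \<open>L (s X) \<equiv> s L X (mod 3)\<close>, so divisibility of \<open>L\<close> by 3 propagates along
  the subsequence \<open>D (3m+2)\<close>.
\<close>

definition twisted_deriv :: "'a::idom poly \<Rightarrow> 'a poly \<Rightarrow> 'a poly" where
  "twisted_deriv A P = P + A * pderiv P"

lemma twisted_deriv_diff:
  "twisted_deriv A (P - R) = twisted_deriv A P - twisted_deriv A R"
  unfolding twisted_deriv_def by (simp add: pderiv_diff algebra_simps)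

lemma twisted_deriv_mult:
  "twisted_deriv A (s * X) = s * twisted_deriv A X + A * pderiv s * X"
  unfolding twisted_deriv_def by (simp add: pderiv_mult algebra_simps)

lemma const_dvd_twisted_deriv_step:
  assumes "[:c:] dvd pderiv s"
    and "[:c:] dvd twisted_deriv A X" and "[:c:] dvd twisted_deriv A Y"
  shows "[:c:] dvd twisted_deriv A (s * X - Y)"
proof -
  have "[:c:] dvd A * pderiv s * X"
    using assms(1) by (simp add: dvd_mult dvd_mult2)
  then show ?thesis
    unfolding twisted_deriv_diff twisted_deriv_mult
    by (rule dvd_diff[OF dvd_add[OF dvd_mult[OF assms(2)]] assms(3)])
qed

text \<open>Three steps of a recurrence \<open>d (k+2) = t d (k+1) - d k\<close> combine into one step
  of the same shape with multiplier \<open>t^3 - 3t\<close> (a Chebyshev polynomial identity).\<close>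
lemma three_step_recurrence:
  fixes d :: "nat \<Rightarrow> 'a::comm_ring_1"
  assumes rec: "\<And>k. d (k + 2) = t * d (k + 1) - d k"
  shows "d (k + 6) = (t ^ 3 - 3 * t) * d (k + 3) - d k"
proof -
  have "d (k + 2) = t * d (k + 1) - d k"
    and "d (k + 3) = t * d (k + 2) - d (k + 1)"
    and "d (k + 4) = t * d (k + 3) - d (k + 2)"
    and "d (k + 5) = t * d (k + 4) - d (k + 3)"
    and "d (k + 6) = t * d (k + 5) - d (k + 4)"
    using rec[of k] rec[of "k + 1"] rec[of "k + 2"] rec[of "k + 3"] rec[of "k + 4"]
    by (simp_all only: add.assoc numeral_plus_one one_plus_numeral numeral_plus_numeral semiring_norm)
  then show ?thesis
    by (simp only:) (simp add: algebra_simps power3_eq_cube)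
qed

definition D :: "nat \<Rightarrow> int poly" where
  "D k = Q (Suc k) - Q k"

lemma D_recurrence: "D (k + 2) = [:-2, 0, 1:] * D (k + 1) - D k"
proof -
  define a :: "int poly" where "a = [:-1, 0, 1:]"
  have Q_rec: "Q (Suc (Suc (Suc k))) = a * (Q (Suc (Suc k)) - Q (Suc k)) + Q k"
    by (simp add: a_def)
  have multiplier: "[:-2, 0, 1:] = a - 1"
    by (simp add: a_def one_pCons)
  show ?thesis
    unfolding D_def multiplier using Q_rec
    by (simp add: eval_nat_numeral algebra_simps del: Q.simps)
qed

lemma three_dvd_pderiv_multiplier:
  "[:3:] dvd pderiv ([:-2, 0, 1:] ^ 3 - 3 * [:-2, 0, 1:] :: int poly)"
proof (rule dvdI)
  show "pderiv ([:-2, 0, 1:] ^ 3 - 3 * [:-2, 0, 1:] :: int poly) = [:3:] * [:0, 6, 0, -8, 0, 2:]"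
    by code_simp
qed

lemma three_dvd_initial:
  "[:3:] dvd twisted_deriv [:-1, 0, 1:] (D 2)"
  "[:3:] dvd twisted_deriv [:-1, 0, 1:] (D 5)"
proof -
  show "[:3:] dvd twisted_deriv [:-1, 0, 1:] (D 2)"
    by (rule dvdI[of _ _ "twisted_deriv [:-1, 0, 1:] (D 2) div [:3:]"])
      (simp add: D_def twisted_deriv_def eval_nat_numeral, code_simp)
  show "[:3:] dvd twisted_deriv [:-1, 0, 1:] (D 5)"
    by (rule dvdI[of _ _ "twisted_deriv [:-1, 0, 1:] (D 5) div [:3:]"])
      (simp add: D_def twisted_deriv_def eval_nat_numeral, code_simp)
qed

text \<open>Along the subsequence \<open>D (3m+2)\<close> the twisted derivative stays divisible by 3;
  the induction carries two consecutive terms because the recurrence has order two.\<close>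
lemma three_dvd_twisted_deriv_D:
  "[:3:] dvd twisted_deriv [:-1, 0, 1:] (D (3 * m + 2))"
proof -
  have "[:3:] dvd twisted_deriv [:-1, 0, 1:] (D (3 * m + 2)) \<and>
        [:3:] dvd twisted_deriv [:-1, 0, 1:] (D (3 * (m + 1) + 2))"
  proof (induction m)
    case 0
    then show ?case using three_dvd_initial by (simp add: numeral_eq_Suc)
  next
    case (Suc m)
    have "D (3 * m + 2 + 6) = ([:-2, 0, 1:] ^ 3 - 3 * [:-2, 0, 1:]) * D (3 * m + 2 + 3) - D (3 * m + 2)"
      by (rule three_step_recurrence[OF D_recurrence])
    then have "D (3 * (Suc m + 1) + 2) =
        ([:-2, 0, 1:] ^ 3 - 3 * [:-2, 0, 1:]) * D (3 * Suc m + 2) - D (3 * m + 2)"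
      by (simp add: algebra_simps)
    then show ?case
      using Suc.IH const_dvd_twisted_deriv_step[OF three_dvd_pderiv_multiplier] by simp
  qed
  then show ?thesis ..
qed

theorem lemma5p2:
  fixes n :: int
  assumes "odd n" and "n \<le> -9" and "3 dvd n"
  shows "\<forall>i. (3::int) dvd coeff (q (n+2) - q (n+4) + [:-1, 0, 1:] * (pderiv (q (n+2)) - pderiv (q (n+4)))) i"
proof -
  define m where "m = nat ((- n - 9) div 6)"
  have "6 dvd - n - 9"
    using assms(1,3) by presburger
  moreover have "int m = (- n - 9) div 6"
    unfolding m_def using assms(2) by simp
  ultimately have n: "n = - 6 * int m - 9"
    by (auto elim!: dvdE)
  have "- (n + 2) - 1 = 2 * int (Suc (3 * m + 2))" and "- (n + 4) - 1 = 2 * int (3 * m + 2)"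
    unfolding n by simp_all
  then have "nat ((- (n + 2) - 1) div 2) = Suc (3 * m + 2)" and "nat ((- (n + 4) - 1) div 2) = 3 * m + 2"
    by (simp only: nonzero_mult_div_cancel_left zero_neq_numeral nat_int)+
  then have "q (n + 2) = Q (Suc (3 * m + 2))" and "q (n + 4) = Q (3 * m + 2)"
    unfolding q_def by (simp_all del: Q.simps)
  then have "q (n+2) - q (n+4) + [:-1, 0, 1:] * (pderiv (q (n+2)) - pderiv (q (n+4))) =
      twisted_deriv [:-1, 0, 1:] (D (3 * m + 2))"
    unfolding twisted_deriv_def D_def by (simp add: pderiv_diff del: Q.simps)
  then show ?thesis
    using three_dvd_twisted_deriv_D[of m] const_poly_dvd_iff by metis
qed

end
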